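(* Let $L$ and $L'$ be isomorphic intersection lattices such that $L'$ is full and $\hat 1_{L'}\in\bullet(\mathrm{nci}(L'))$. Then $\hat 1_L\in\bullet(\mathrm{nci}(L))$.
   Context: A finite family $\mathcal{F}$ of sets is non-trivial if it is non-empty and no $X\in\mathcal{F}$ satisfies $X=\bigcup\mathcal{F}$. For such $\mathcal{F}$ and non-empty $\mathcal{T}\subseteq\mathcal{F}$, let $S_{\mathcal{T}}=\bigcap\mathcal{T}$, and let $S_\emptyset=\bigcup\mathcal{F}$. The intersection lattice of $\mathcal{F}$ is $\mathbb{L}_{\mathcal{F}}=(\{S_{\mathcal{T}}\mid\mathcal{T}\subseteq\mathcal{F}\},\subseteq)$, with greatest element $\hat 1=\bigcup\mathcal{F}$; an intersection lattice is one of this form. For $L=\mathbb{L}_{\mathcal{F}}$ and $x\in\hat 1$, let $\min_L(x)=S_{\{X\in\mathcal{F}\mid x\in X\}}$. $L$ is full if for every $U\in L$ with $U\neq\hat 1$ there exists $x\in\hat 1$ with $\min_L(x)=U$. The Möbius function of a finite poset $P$ is defined for $x\le y$ by $\mu_P(y,y)=1$ and $\mu_P(x,y)=-\sum_{x<z\le y}\mu_P(z,y)$. The non-cancelling intersections are $\mathrm{nci}(L)=\{U\in L\mid U\neq\hat 1,\ \mu_L(U,\hat 1)\neq 0\}$. For sets $A,B$, $A\,\dot\cup\,B=A\cup B$ is defined only when $A\cap B=\emptyset$, and $A\,\dot\setminus\,B=A\setminus B$ is defined only when $B\subseteq A$. For a finite family $\mathcal{G}$ of sets, $\bullet(\mathcal{G})$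 is the smallest family of sets containing $\emptyset$ and every member of $\mathcal{G}$ and closed under all well-defined disjoint unions and subset complements. *)

theory Defs
  imports Main
begin

definition nontrivial :: "'a set set \<Rightarrow> bool" where
  "nontrivial F \<longleftrightarrow> finite F \<and> F \<noteq> {} \<and> (\<forall>X\<in>F. X \<noteq> \<Union>F)"

definition S_of :: "'a set set \<Rightarrow> 'a set set \<Rightarrow> 'a set" where
  "S_of F T = (if T = {} then \<Union>F else \<Inter>T)"

text \<open>Carrier of the intersection lattice L_F (ordered by inclusion); its top is the union of F.\<close>
definition ilat :: "'a set set \<Rightarrow> 'a set set" where
  "ilat F = {S_of F T | T. T \<subseteq> F}"

definition min_L :: "'a set set \<Rightarrow> 'a \<Rightarrow> 'a set" where
  "min_L F x = S_of F {X \<in> F. x \<in> X}"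

definition full :: "'a set set \<Rightarrow> bool" where
  "full F \<longleftrightarrow> (\<forall>U\<in>ilat F. U \<noteq> \<Union>F \<longrightarrow> (\<exists>x\<in>\<Union>F. min_L F x = U))"

function mobius :: "'a set set \<Rightarrow> 'a set \<Rightarrow> 'a set \<Rightarrow> int" where
  "mobius P x y =
     (if \<not> finite P then 0
      else if x = y then 1
      else if x \<subset> y then - (\<Sum>z \<in> {z \<in> P. x \<subset> z \<and> z \<subseteq> y}. mobius P z y)
      else 0)"
  by auto
termination
proof (relation "measure (\<lambda>(P, x, y). card {z \<in> P. x \<subset> z \<and> z \<subseteq> y})")
  show "wf (measure (\<lambda>(P, x, y). card {z \<in> P. x \<subset> z \<and> z \<subseteq> y}))" by simp
next
  fix P :: "'a set set" and x y z
  assume fin: "\<not> \<not> finite P" and "x \<noteq> y" "x \<subset> y" and z: "z \<in> {z \<in> P. x \<subset> z \<and> z \<subseteq> y}"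
  have "{w \<in> P. z \<subset> w \<and> w \<subseteq> y} \<subset> {w \<in> P. x \<subset> w \<and> w \<subseteq> y}"
    using z by auto
  then have "card {w \<in> P. z \<subset> w \<and> w \<subseteq> y} < card {w \<in> P. x \<subset> w \<and> w \<subseteq> y}"
    using fin by (intro psubset_card_mono) auto
  then show "((P, z, y), P, x, y) \<in> measure (\<lambda>(P, x, y). card {z \<in> P. x \<subset> z \<and> z \<subseteq> y})"
    by simp
qed

definition nci :: "'a set set \<Rightarrow> 'a set set" where
  "nci F = {U \<in> ilat F. U \<noteq> \<Union>F \<and> mobius (ilat F) U (\<Union>F) \<noteq> 0}"

inductive_set bullet :: "'a set set \<Rightarrow> 'a set set" for G :: "'a set set" where
  empty: "{} \<in> bullet G"
| base: "X \<in> G \<Longrightarrow> X \<in> bullet G"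
| dunion: "A \<in> bullet G \<Longrightarrow> B \<in> bullet G \<Longrightarrow> A \<inter> B = {} \<Longrightarrow> A \<union> B \<in> bullet G"
| sdiff: "A \<in> bullet G \<Longrightarrow> B \<in> bullet G \<Longrightarrow> B \<subseteq> A \<Longrightarrow> A - B \<in> bullet G"

definition lat_iso :: "'a set set \<Rightarrow> 'b set set \<Rightarrow> bool" where
  "lat_iso L L' \<longleftrightarrow> (\<exists>f. bij_betw f L L' \<and> (\<forall>U\<in>L. \<forall>V\<in>L. U \<subseteq> V \<longleftrightarrow> f U \<subseteq> f V))"

end

theory Submission
  imports Defs
begin

text \<open>Call the points x of the ground set with the same min(x) a cell of L. Every element of L
  other than the top is the union of the cells of the elements below it. Pulling cells of L' back
  along the isomorphism f, i.e. sending x to the cell of f(min(x)), turns each element f(W) of L'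
  into W, and non-cancelling elements into non-cancelling ones because the Moebius function is an
  order invariant. Since L' is full, its cells below the top are non-empty, so a union of cells
  determines its set of cells; hence the pull-back commutes with disjoint unions and subset
  complements, and it sends the ground set of L' to the ground set of L.\<close>

declare mobius.simps [simp del]

lemma mobius_refl: "finite P \<Longrightarrow> mobius P x x = 1"
  by (simp add: mobius.simps)

lemma mobius_psubset:
  "finite P \<Longrightarrow> x \<subset> y \<Longrightarrow> mobius P x y = - (\<Sum>z \<in> {z \<in> P. x \<subset> z \<and> z \<subseteq> y}. mobius P z y)"
  by (subst mobius.simps) auto

lemma mobius_not_subset: "\<not> x \<subseteq> y \<Longrightarrow> mobius P x y = 0"
  by (subst mobius.simps) auto

definition inclusion_iso :: "('a set \<Rightarrow> 'b set) \<Rightarrow> 'a set set \<Rightarrow> 'b set set \<Rightarrow> bool" where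
  "inclusion_iso f L L' \<longleftrightarrow> bij_betw f L L' \<and> (\<forall>U\<in>L. \<forall>V\<in>L. U \<subseteq> V \<longleftrightarrow> f U \<subseteq> f V)"

lemma lat_iso_iff_inclusion_iso: "lat_iso L L' \<longleftrightarrow> (\<exists>f. inclusion_iso f L L')"
  by (simp add: lat_iso_def inclusion_iso_def)

lemma inclusion_iso_subset_iff:
  "inclusion_iso f L L' \<Longrightarrow> U \<in> L \<Longrightarrow> V \<in> L \<Longrightarrow> f U \<subseteq> f V \<longleftrightarrow> U \<subseteq> V"
  by (simp add: inclusion_iso_def)

lemma inclusion_iso_eq_iff:
  "inclusion_iso f L L' \<Longrightarrow> U \<in> L \<Longrightarrow> V \<in> L \<Longrightarrow> f U = f V \<longleftrightarrow> U = V"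
  by (auto simp: inclusion_iso_def bij_betw_def inj_on_eq_iff)

lemma inclusion_iso_psubset_iff:
  "inclusion_iso f L L' \<Longrightarrow> U \<in> L \<Longrightarrow> V \<in> L \<Longrightarrow> f U \<subset> f V \<longleftrightarrow> U \<subset> V"
  by (auto simp: psubset_eq inclusion_iso_subset_iff inclusion_iso_eq_iff)

lemma inclusion_iso_image: "inclusion_iso f L L' \<Longrightarrow> f ` L = L'"
  by (simp add: inclusion_iso_def bij_betw_def)

lemma inclusion_iso_greatest:
  assumes iso: "inclusion_iso f L L'"
    and "t \<in> L" "\<forall>U\<in>L. U \<subseteq> t" and "t' \<in> L'" "\<forall>U\<in>L'. U \<subseteq> t'"
  shows "f t = t'"
proof -
  obtain s where s: "s \<in> L" "f s = t'"
    using \<open>t' \<in> L'\<close> inclusion_iso_image [OF iso] by blast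
  have "f s \<subseteq> f t"
    using s assms(2,3) inclusion_iso_subset_iff [OF iso] by blast
  moreover have "f t \<subseteq> t'"
    using assms(2,5) inclusion_iso_image [OF iso] by blast
  ultimately show ?thesis using s by simp
qed

lemma inclusion_iso_interval:
  assumes iso: "inclusion_iso f P P'" and "x \<in> P" "y \<in> P"
  shows "f ` {z \<in> P. x \<subset> z \<and> z \<subseteq> y} = {z \<in> P'. f x \<subset> z \<and> z \<subseteq> f y}"
proof -
  have "{z \<in> P'. f x \<subset> z \<and> z \<subseteq> f y} = f ` {z \<in> P. f x \<subset> f z \<and> f z \<subseteq> f y}"
    unfolding inclusion_iso_image [OF iso, symmetric] by blast
  also have "{z \<in> P. f x \<subset> f z \<and> f z \<subseteq> f y} = {z \<in> P. x \<subset> z \<and> z \<subseteq> y}"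
    using assms
    by (simp add: inclusion_iso_subset_iff [OF iso] inclusion_iso_psubset_iff [OF iso] cong: conj_cong)
  finally show ?thesis by simp
qed

lemma mobius_inclusion_iso:
  "finite P \<Longrightarrow> inclusion_iso f P P' \<Longrightarrow> x \<in> P \<Longrightarrow> y \<in> P \<Longrightarrow>
    mobius P' (f x) (f y) = mobius P x y"
proof (induction P x y rule: mobius.induct)
  case (1 P x y)
  then have fin': "finite P'"
    by (metis bij_betw_finite inclusion_iso_def)
  consider (eq) "x = y" | (less) "x \<subset> y" | (incomparable) "\<not> x \<subseteq> y"
    by blast
  then show ?case
  proof cases
    case eq
    then show ?thesis using "1.prems"(1) fin' by (simp add: mobius_refl)
  next
    case less
    let ?I = "{z \<in> P. x \<subset> z \<and> z \<subseteq> y}"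
    have inj: "inj_on f ?I"
      using "1.prems"(2) by (auto simp: inclusion_iso_def bij_betw_def intro: inj_on_subset)
    have "mobius P' (f x) (f y) = - (\<Sum>z \<in> f ` ?I. mobius P' z (f y))"
      using "1.prems" less fin'
      by (simp add: mobius_psubset inclusion_iso_interval inclusion_iso_psubset_iff)
    also have "\<dots> = - (\<Sum>z \<in> ?I. mobius P' (f z) (f y))"
      by (simp add: sum.reindex [OF inj])
    also have "\<dots> = - (\<Sum>z \<in> ?I. mobius P z y)"
      using "1.IH" "1.prems" less by (intro arg_cong [where f = uminus] sum.cong) auto
    also have "\<dots> = mobius P x y"
      using "1.prems"(1) less by (simp add: mobius_psubset)
    finally show ?thesis .
  next
    case incomparable
    then show ?thesis using "1.prems" by (simp add: mobius_not_subset inclusion_iso_subset_iff)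
  qed
qed

definition saturated :: "('b \<Rightarrow> 'k) \<Rightarrow> 'b set \<Rightarrow> bool" where
  "saturated c A \<longleftrightarrow> (\<forall>x y. x \<in> A \<longrightarrow> c y = c x \<longrightarrow> y \<in> A)"

lemma bullet_saturated:
  assumes "\<forall>U\<in>G. saturated c U" and "A \<in> bullet G"
  shows "saturated c A"
  using assms(2) by induction (use assms(1) in \<open>simp_all add: saturated_def, metis\<close>)

lemma bullet_pullback:
  assumes sat: "\<forall>U\<in>G. saturated c U"
    and generators: "\<And>U. U \<in> G \<Longrightarrow> X \<inter> d -` c ` U \<in> bullet G'"
    and "A \<in> bullet G"
  shows "X \<inter> d -` c ` A \<in> bullet G'"
  using \<open>A \<in> bullet G\<close>
proof induction
  case empty
  show ?case by (simp add: bullet.empty)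
next
  case (base U)
  then show ?case by (rule generators)
next
  case (dunion A B)
  have "c ` A \<inter> c ` B = {}"
    using bullet_saturated [OF sat dunion.hyps(1)] dunion.hyps(3)
    by (auto simp: saturated_def) (metis disjoint_iff)
  then have "(X \<inter> d -` c ` A) \<inter> (X \<inter> d -` c ` B) = {}"
    by blast
  from bullet.dunion [OF dunion.IH this] show ?case
    by (simp add: image_Un Int_Un_distrib)
next
  case (sdiff A B)
  have image_diff: "c ` (A - B) = c ` A - c ` B"
    using bullet_saturated [OF sat sdiff.hyps(2)] by (auto simp: saturated_def)
  have "X \<inter> d -` c ` B \<subseteq> X \<inter> d -` c ` A"
    using sdiff.hyps(3) by blast
  from bullet.sdiff [OF sdiff.IH this] show ?case
    by (simp add: image_diff Diff_Int_distrib vimage_Diff)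
qed

lemma finite_ilat:
  assumes "finite F"
  shows "finite (ilat F)"
proof -
  have "ilat F = S_of F ` Pow F"
    unfolding ilat_def by auto
  then show ?thesis
    using assms by simp
qed

lemma Union_in_ilat: "\<Union>F \<in> ilat F"
  unfolding ilat_def S_of_def by auto

lemma ilat_subset_Union: "U \<in> ilat F \<Longrightarrow> U \<subseteq> \<Union>F"
  unfolding ilat_def S_of_def by (auto split: if_splits)

lemma inclusion_iso_Union: "inclusion_iso f (ilat F) (ilat F') \<Longrightarrow> f (\<Union>F) = \<Union>F'"
  by (erule inclusion_iso_greatest [OF _ Union_in_ilat _ Union_in_ilat])
    (simp_all add: ilat_subset_Union)

lemma min_L_in_ilat: "min_L F x \<in> ilat F"
  unfolding ilat_def min_L_def by blast

lemma min_L_outside: "x \<notin> \<Union>F \<Longrightarrow> min_L F x = \<Union>F"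
  unfolding min_L_def S_of_def by auto

lemma mem_min_L: "x \<in> \<Union>F \<Longrightarrow> x \<in> min_L F x"
  unfolding min_L_def S_of_def by auto

lemma min_L_neq_Union:
  assumes "nontrivial F" "x \<in> \<Union>F"
  shows "min_L F x \<noteq> \<Union>F"
proof -
  obtain X where X: "X \<in> F" "x \<in> X"
    using assms(2) by auto
  then have "min_L F x \<subseteq> X"
    unfolding min_L_def S_of_def by auto
  moreover have "X \<subset> \<Union>F"
    using assms(1) X unfolding nontrivial_def by auto
  ultimately show ?thesis by auto
qed

lemma mem_ilat_iff_min_L_subset:
  assumes "U \<in> ilat F" "x \<in> \<Union>F"
  shows "x \<in> U \<longleftrightarrow> min_L F x \<subseteq> U"
proof
  assume "x \<in> U"
  obtain T where T: "T \<subseteq> F" "U = S_of F T"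
    using assms(1) unfolding ilat_def by auto
  show "min_L F x \<subseteq> U"
  proof (cases "T = {}")
    case True
    then show ?thesis using T ilat_subset_Union [OF min_L_in_ilat] by (simp add: S_of_def)
  next
    case False
    then have "T \<subseteq> {X \<in> F. x \<in> X}"
      using T \<open>x \<in> U\<close> by (auto simp: S_of_def)
    then show ?thesis using T False by (auto simp: S_of_def min_L_def)
  qed
next
  assume "min_L F x \<subseteq> U"
  then show "x \<in> U" using mem_min_L [OF assms(2)] by auto
qed

text \<open>The top element has to be excluded: min(x) is the whole ground set also for every x
  outside of it.\<close>

lemma saturated_ilat:
  assumes "U \<in> ilat F" "U \<noteq> \<Union>F"
  shows "saturated (min_L F) U"
  unfolding saturated_def
proof (intro allI impI)
  fix x y assume "x \<in> U" and eq: "min_L F y = min_L F x"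
  have "x \<in> \<Union>F"
    using \<open>x \<in> U\<close> ilat_subset_Union [OF assms(1)] by blast
  then have sub: "min_L F y \<subseteq> U"
    using eq \<open>x \<in> U\<close> mem_ilat_iff_min_L_subset [OF assms(1)] by simp
  have "y \<in> \<Union>F"
  proof (rule ccontr)
    assume "y \<notin> \<Union>F"
    then have "\<Union>F \<subseteq> U"
      using sub min_L_outside [of y F] by simp
    then show False
      using assms(2) ilat_subset_Union [OF assms(1)] by blast
  qed
  then show "y \<in> U"
    using sub mem_min_L [of y F] by blast
qed

lemma image_min_L_full:
  assumes "nontrivial F" "full F" "U \<in> ilat F"
  shows "min_L F ` U = {V \<in> ilat F. V \<subseteq> U} - {\<Union>F}"
proof
  show "min_L F ` U \<subseteq> {V \<in> ilat F. V \<subseteq> U} - {\<Union>F}"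
  proof
    fix V assume "V \<in> min_L F ` U"
    then obtain x where x: "x \<in> U" "V = min_L F x"
      by blast
    then have "x \<in> \<Union>F"
      using ilat_subset_Union [OF assms(3)] by blast
    then show "V \<in> {V \<in> ilat F. V \<subseteq> U} - {\<Union>F}"
      using x min_L_in_ilat min_L_neq_Union [OF assms(1)] mem_ilat_iff_min_L_subset [OF assms(3)]
      by simp
  qed
  show "{V \<in> ilat F. V \<subseteq> U} - {\<Union>F} \<subseteq> min_L F ` U"
  proof
    fix V assume V: "V \<in> {V \<in> ilat F. V \<subseteq> U} - {\<Union>F}"
    then have "V \<in> ilat F" "V \<noteq> \<Union>F"
      by auto
    then obtain x where x: "x \<in> \<Union>F" "min_L F x = V"
      using assms(2) unfolding full_def by metis
    then have "x \<in> U"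
      using V mem_min_L [OF x(1)] by auto
    with x(2) show "V \<in> min_L F ` U"
      by blast
  qed
qed

lemma pullback_min_L:
  assumes "nontrivial F" "nontrivial F'" "full F'"
    and iso: "inclusion_iso f (ilat F) (ilat F')" and W: "W \<in> ilat F"
  shows "\<Union>F \<inter> (f \<circ> min_L F) -` min_L F' ` f W = W"
proof -
  have f_top: "f (\<Union>F) = \<Union>F'"
    using iso by (rule inclusion_iso_Union)
  have "f W \<in> ilat F'"
    using W inclusion_iso_image [OF iso] by blast
  with assms(2,3) have image: "min_L F' ` f W = {V \<in> ilat F'. V \<subseteq> f W} - {\<Union>F'}"
    by (rule image_min_L_full)
  have pointwise: "f (min_L F x) \<in> min_L F' ` f W \<longleftrightarrow> x \<in> W" if x: "x \<in> \<Union>F" for x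
  proof -
    have min: "min_L F x \<in> ilat F" "min_L F x \<noteq> \<Union>F"
      by (rule min_L_in_ilat, rule min_L_neq_Union [OF assms(1) x])
    have "f (min_L F x) \<noteq> \<Union>F'"
      using min(2) f_top inclusion_iso_eq_iff [OF iso min(1) Union_in_ilat] by simp
    moreover have "f (min_L F x) \<in> ilat F'"
      using min(1) inclusion_iso_image [OF iso] by blast
    moreover have "f (min_L F x) \<subseteq> f W \<longleftrightarrow> x \<in> W"
      using mem_ilat_iff_min_L_subset [OF W x] inclusion_iso_subset_iff [OF iso min(1) W] by simp
    ultimately show ?thesis
      using image by simp
  qed
  show ?thesis
  proof (rule set_eqI)
    fix x
    show "x \<in> \<Union>F \<inter> (f \<circ> min_L F) -` min_L F' ` f W \<longleftrightarrow> x \<in> W"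
    proof (cases "x \<in> \<Union>F")
      case True
      then show ?thesis by (simp add: pointwise)
    next
      case False
      then show ?thesis using ilat_subset_Union [OF W] by blast
    qed
  qed
qed

lemma nci_inclusion_iso:
  assumes "finite F" and iso: "inclusion_iso f (ilat F) (ilat F')" and "W \<in> ilat F"
  shows "f W \<in> nci F' \<longleftrightarrow> W \<in> nci F"
proof -
  have f_top: "f (\<Union>F) = \<Union>F'"
    using iso by (rule inclusion_iso_Union)
  have "mobius (ilat F') (f W) (\<Union>F') = mobius (ilat F) W (\<Union>F)"
    using mobius_inclusion_iso [OF finite_ilat [OF \<open>finite F\<close>] iso \<open>W \<in> ilat F\<close> Union_in_ilat]
    by (simp add: f_top)
  moreover have "f W \<noteq> \<Union>F' \<longleftrightarrow> W \<noteq> \<Union>F"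
    using f_top inclusion_iso_eq_iff [OF iso \<open>W \<in> ilat F\<close> Union_in_ilat] by simp
  ultimately show ?thesis
    using \<open>W \<in> ilat F\<close> inclusion_iso_image [OF iso] by (auto simp: nci_def)
qed

theorem lemma4p4:
  fixes F :: "'a set set" and F' :: "'b set set"
  assumes "nontrivial F" and "nontrivial F'"
    and "lat_iso (ilat F) (ilat F')"
    and "full F'"
    and "\<Union>F' \<in> bullet (nci F')"
  shows "\<Union>F \<in> bullet (nci F)"
proof -
  obtain f where iso: "inclusion_iso f (ilat F) (ilat F')"
    using assms(3) lat_iso_iff_inclusion_iso by blast
  let ?pullback = "\<lambda>A. \<Union>F \<inter> (f \<circ> min_L F) -` min_L F' ` A"
  have saturated: "\<forall>U\<in>nci F'. saturated (min_L F') U"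
    by (simp add: nci_def saturated_ilat)
  have generators: "?pullback U \<in> bullet (nci F)" if "U \<in> nci F'" for U
  proof -
    have "U \<in> f ` ilat F"
      using that inclusion_iso_image [OF iso] by (simp add: nci_def)
    then obtain W where W: "W \<in> ilat F" "U = f W"
      by blast
    then have "W \<in> nci F"
      using that assms(1) nci_inclusion_iso [OF _ iso] by (auto simp: nontrivial_def)
    then show ?thesis
      using pullback_min_L [OF assms(1,2,4) iso W(1)] W(2) by (simp add: bullet.base)
  qed
  have "?pullback (\<Union>F') \<in> bullet (nci F)"
    using bullet_pullback [OF saturated generators assms(5)] .
  moreover have "f (\<Union>F) = \<Union>F'"
    using iso by (rule inclusion_iso_Union)
  ultimately show ?thesis
    using pullback_min_L [OF assms(1,2,4) iso Union_in_ilat] by simp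
qed

end
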